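(* Let $R$ and $S$ be commutative rings with identity, $f:R\to S$ a ring homomorphism, and $J$ a nonzero proper ideal of $S$. Suppose that $\operatorname{Spec}(S)\setminus V(J)$ is compactly packed. Then for any family $\{\mathfrak{q}_\delta\}_{\delta\in\Delta}$ of elements of $\operatorname{Spec}(S)\setminus V(J)$, the subset $\{\overline{\mathfrak{q}_\delta}^f\}_{\delta\in\Delta}$ of $\operatorname{Spec}(R\bowtie^f J)$ is compactly packed.
   Context: $R\bowtie^f J:=\{(r,f(r)+j)\mid r\in R,\ j\in J\}$, a subring of $R\times S$. $V(J)$ is the set of prime ideals of $S$ containing $J$. For a prime ideal $\mathfrak{q}$ of $S$ with $J\not\subseteq\mathfrak{q}$, $\overline{\mathfrak{q}}^f:=\{(r,f(r)+j)\mid r\in R,\ j\in J,\ f(r)+j\in\mathfrak{q}\}$, which is a prime ideal of $R\bowtie^f J$. For a commutative ring $A$, a subset $X\subseteq\operatorname{Spec}(A)$ is compactly packed if whenever an ideal $I$ of $A$ is contained in the union of a family $\{\mathfrak{p}_i\}_i$ of elements of $X$, then $I\subseteq\mathfrak{p}_i$ for some $i$. *)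

theory Defs
  imports "HOL-Algebra.Algebra"
begin

definition Spec :: "('a, 'm) ring_scheme \<Rightarrow> 'a set set" where
  "Spec A = {P. primeideal P A}"

definition VJ :: "('a, 'm) ring_scheme \<Rightarrow> 'a set \<Rightarrow> 'a set set" where
  "VJ A J = {P \<in> Spec A. J \<subseteq> P}"

definition amalg :: "('a, 'm) ring_scheme \<Rightarrow> ('b, 'n) ring_scheme \<Rightarrow> ('a \<Rightarrow> 'b) \<Rightarrow> 'b set
    \<Rightarrow> ('a \<times> 'b) ring" where
  "amalg R S f J =
    \<lparr> partial_object.carrier = {(r, f r \<oplus>\<^bsub>S\<^esub> j) | r j. r \<in> carrier R \<and> j \<in> J},
      monoid.mult = (\<lambda>x y. (fst x \<otimes>\<^bsub>R\<^esub> fst y, snd x \<otimes>\<^bsub>S\<^esub> snd y)),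
      monoid.one = (\<one>\<^bsub>R\<^esub>, \<one>\<^bsub>S\<^esub>),
      ring.zero = (\<zero>\<^bsub>R\<^esub>, \<zero>\<^bsub>S\<^esub>),
      ring.add = (\<lambda>x y. (fst x \<oplus>\<^bsub>R\<^esub> fst y, snd x \<oplus>\<^bsub>S\<^esub> snd y)) \<rparr>"

definition qbar :: "('a, 'm) ring_scheme \<Rightarrow> ('b, 'n) ring_scheme \<Rightarrow> ('a \<Rightarrow> 'b) \<Rightarrow> 'b set
    \<Rightarrow> 'b set \<Rightarrow> ('a \<times> 'b) set" where
  "qbar R S f J q =
    {(r, f r \<oplus>\<^bsub>S\<^esub> j) | r j. r \<in> carrier R \<and> j \<in> J \<and> f r \<oplus>\<^bsub>S\<^esub> j \<in> q}"

definition compactly_packed :: "('a, 'm) ring_scheme \<Rightarrow> 'a set set \<Rightarrow> bool" where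
  "compactly_packed A Xs \<longleftrightarrow>
    (\<forall>K Ps. ideal K A \<longrightarrow> Ps \<subseteq> Xs \<longrightarrow> K \<subseteq> \<Union>Ps \<longrightarrow> (\<exists>P\<in>Ps. K \<subseteq> P))"

end

theory Submission
  imports Defs
begin

text \<open>Let K be an ideal of R \<bowtie>^f J covered by some of the primes q-bar. The set
  I = {x \<in> S. (0, j x) \<in> K for all j \<in> J} is an ideal of S containing the second coordinate of
  every element of K, because (0, j) (r, s) = (0, j s). If some x \<in> I avoided all the q's,
  primality would put J inside their union, hence (S minus V(J) being compactly packed) inside one
  of them, which is excluded. So I lies in the union of the q's, hence in a single q, and then
  K \<subseteq> q-bar.\<close>

lemma amalg_simps:
  "carrier (amalg R S f J) = {(r, f r \<oplus>\<^bsub>S\<^esub> j) | r j. r \<in> carrier R \<and> j \<in> J}"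
  "x \<otimes>\<^bsub>amalg R S f J\<^esub> y = (fst x \<otimes>\<^bsub>R\<^esub> fst y, snd x \<otimes>\<^bsub>S\<^esub> snd y)"
  "x \<oplus>\<^bsub>amalg R S f J\<^esub> y = (fst x \<oplus>\<^bsub>R\<^esub> fst y, snd x \<oplus>\<^bsub>S\<^esub> snd y)"
  "\<zero>\<^bsub>amalg R S f J\<^esub> = (\<zero>\<^bsub>R\<^esub>, \<zero>\<^bsub>S\<^esub>)"
  by (simp_all add: amalg_def)

lemma qbar_eq: "qbar R S f J Q = {x \<in> carrier (amalg R S f J). snd x \<in> Q}"
  by (auto simp: qbar_def amalg_simps)

lemma compactly_packedD:
  "compactly_packed A Xs \<Longrightarrow> ideal K A \<Longrightarrow> Ps \<subseteq> Xs \<Longrightarrow> K \<subseteq> \<Union>Ps \<Longrightarrow> \<exists>P\<in>Ps. K \<subseteq> P"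
  by (simp add: compactly_packed_def)

lemma compactly_packed_subset:
  "compactly_packed A Xs \<Longrightarrow> Ys \<subseteq> Xs \<Longrightarrow> compactly_packed A Ys"
  unfolding compactly_packed_def[of A Ys] using compactly_packedD[of A Xs] by (meson order_trans)

lemma (in cring) idealI_cring:
  assumes "I \<subseteq> carrier R" and "\<zero> \<in> I"
    and "\<And>a. a \<in> I \<Longrightarrow> \<ominus> a \<in> I"
    and "\<And>a b. \<lbrakk>a \<in> I; b \<in> I\<rbrakk> \<Longrightarrow> a \<oplus> b \<in> I"
    and "\<And>a x. \<lbrakk>a \<in> I; x \<in> carrier R\<rbrakk> \<Longrightarrow> x \<otimes> a \<in> I"
  shows "ideal I R"
proof (rule idealI[OF ring_axioms add.subgroupI])
  show "a \<otimes> x \<in> I" if "a \<in> I" and "x \<in> carrier R" for a x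
    using assms that m_comm by (metis subsetD)
qed (use assms in auto)

definition amalg_colon :: "('a, 'm) ring_scheme \<Rightarrow> ('b, 'n) ring_scheme \<Rightarrow> 'b set
    \<Rightarrow> ('a \<times> 'b) set \<Rightarrow> 'b set" where
  "amalg_colon R S J K = {x \<in> carrier S. \<forall>j\<in>J. (\<zero>\<^bsub>R\<^esub>, j \<otimes>\<^bsub>S\<^esub> x) \<in> K}"

locale amalgamation = R: ring R + S: cring S + J: ideal J S
  for R :: "('a, 'm) ring_scheme" and S :: "('b, 'n) ring_scheme" and f J +
  assumes f_hom: "f \<in> ring_hom R S"
begin

abbreviation A where "A \<equiv> amalg R S f J"

lemma zero_pair_in_carrier: "j \<in> J \<Longrightarrow> (\<zero>\<^bsub>R\<^esub>, j) \<in> carrier A"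
proof -
  assume j: "j \<in> J"
  have "f \<zero>\<^bsub>R\<^esub> = \<zero>\<^bsub>S\<^esub>"
    using ring_hom_zero[OF f_hom R.ring_axioms S.ring_axioms] .
  then have "(\<zero>\<^bsub>R\<^esub>, j) = (\<zero>\<^bsub>R\<^esub>, f \<zero>\<^bsub>R\<^esub> \<oplus>\<^bsub>S\<^esub> j)"
    using j J.a_subset by auto
  then show ?thesis
    using j by (auto simp: amalg_simps)
qed

lemma snd_in_carrier: "x \<in> carrier A \<Longrightarrow> snd x \<in> carrier S"
  using ring_hom_closed[OF f_hom] J.a_subset by (auto simp: amalg_simps)

lemma zero_pair_mult_in_ideal:
  assumes "ideal K A" and "j \<in> J" and "(r, s) \<in> K"
  shows "(\<zero>\<^bsub>R\<^esub>, j \<otimes>\<^bsub>S\<^esub> s) \<in> K"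
proof -
  interpret K: ideal K A by fact
  have "(\<zero>\<^bsub>R\<^esub>, j) \<otimes>\<^bsub>A\<^esub> (r, s) \<in> K"
    using K.I_l_closed[OF assms(3) zero_pair_in_carrier[OF assms(2)]] .
  moreover have "r \<in> carrier R"
    using assms(3) K.a_subset by (auto simp: amalg_simps)
  ultimately show ?thesis
    by (simp add: amalg_simps)
qed

lemma snd_in_amalg_colon:
  assumes "ideal K A" and "(r, s) \<in> K"
  shows "s \<in> amalg_colon R S J K"
proof -
  interpret K: ideal K A by fact
  have "s \<in> carrier S"
    using snd_in_carrier[of "(r, s)"] K.a_subset assms(2) by auto
  then show ?thesis
    using zero_pair_mult_in_ideal[OF assms(1) _ assms(2)] by (simp add: amalg_colon_def)
qed

lemma ideal_amalg_colon:
  assumes "ideal K A"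
  shows "ideal (amalg_colon R S J K) S"
proof -
  interpret K: ideal K A by fact
  let ?I = "amalg_colon R S J K"
  have I_carrier: "x \<in> carrier S" if "x \<in> ?I" for x
    using that by (simp add: amalg_colon_def)
  have I_mem: "(\<zero>\<^bsub>R\<^esub>, j \<otimes>\<^bsub>S\<^esub> x) \<in> K" if "x \<in> ?I" "j \<in> J" for x j
    using that by (simp add: amalg_colon_def)
  show ?thesis
  proof (rule S.idealI_cring)
    show "?I \<subseteq> carrier S"
      using I_carrier by blast
    have "(\<zero>\<^bsub>R\<^esub>, \<zero>\<^bsub>S\<^esub>) \<in> K"
      using additive_subgroup.zero_closed[OF K.is_additive_subgroup] by (simp add: amalg_simps)
    then show "\<zero>\<^bsub>S\<^esub> \<in> ?I"
      using J.a_subset by (auto simp: amalg_colon_def)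
  next
    fix x assume x: "x \<in> ?I"
    have "(\<zero>\<^bsub>R\<^esub>, j \<otimes>\<^bsub>S\<^esub> (\<ominus>\<^bsub>S\<^esub> x)) \<in> K" if j: "j \<in> J" for j
    proof -
      have "j \<otimes>\<^bsub>S\<^esub> (\<ominus>\<^bsub>S\<^esub> x) = (\<ominus>\<^bsub>S\<^esub> j) \<otimes>\<^bsub>S\<^esub> x"
        using j J.a_subset I_carrier[OF x] by (simp add: S.l_minus S.r_minus)
      then show ?thesis
        using I_mem[OF x J.a_inv_closed[OF j]] by simp
    qed
    then show "\<ominus>\<^bsub>S\<^esub> x \<in> ?I"
      using I_carrier[OF x] by (simp add: amalg_colon_def)
  next
    fix x y assume x: "x \<in> ?I" and y: "y \<in> ?I"
    have "(\<zero>\<^bsub>R\<^esub>, j \<otimes>\<^bsub>S\<^esub> (x \<oplus>\<^bsub>S\<^esub> y)) \<in> K" if j: "j \<in> J" for j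
    proof -
      have "(\<zero>\<^bsub>R\<^esub>, j \<otimes>\<^bsub>S\<^esub> x) \<oplus>\<^bsub>A\<^esub> (\<zero>\<^bsub>R\<^esub>, j \<otimes>\<^bsub>S\<^esub> y) \<in> K"
        using I_mem[OF x j] I_mem[OF y j] by (rule additive_subgroup.a_closed[OF K.is_additive_subgroup])
      then show ?thesis
        using j J.a_subset I_carrier[OF x] I_carrier[OF y] by (simp add: amalg_simps S.r_distr)
    qed
    then show "x \<oplus>\<^bsub>S\<^esub> y \<in> ?I"
      using I_carrier[OF x] I_carrier[OF y] by (simp add: amalg_colon_def)
  next
    fix a x assume a: "a \<in> ?I" and x: "x \<in> carrier S"
    have "(\<zero>\<^bsub>R\<^esub>, j \<otimes>\<^bsub>S\<^esub> (x \<otimes>\<^bsub>S\<^esub> a)) \<in> K" if j: "j \<in> J" for j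
      using I_mem[OF a J.I_r_closed[OF j x]] j J.a_subset I_carrier[OF a] x
      by (simp add: S.m_assoc)
    then show "x \<otimes>\<^bsub>S\<^esub> a \<in> ?I"
      using I_carrier[OF a] x by (simp add: amalg_colon_def)
  qed
qed

lemma amalg_colon_subset_Union:
  assumes "K \<subseteq> \<Union>(qbar R S f J ` Qs)" and "Qs \<subseteq> Spec S" and "\<not> J \<subseteq> \<Union>Qs"
  shows "amalg_colon R S J K \<subseteq> \<Union>Qs"
proof
  fix x assume x: "x \<in> amalg_colon R S J K"
  show "x \<in> \<Union>Qs"
  proof (rule ccontr)
    assume x_avoids: "x \<notin> \<Union>Qs"
    have "j \<in> \<Union>Qs" if j: "j \<in> J" for j
    proof -
      have "(\<zero>\<^bsub>R\<^esub>, j \<otimes>\<^bsub>S\<^esub> x) \<in> K"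
        using x j by (simp add: amalg_colon_def)
      then obtain Q where Q: "Q \<in> Qs" and "j \<otimes>\<^bsub>S\<^esub> x \<in> Q"
        using assms(1) by (auto simp: qbar_eq)
      moreover have "primeideal Q S"
        using Q assms(2) by (simp add: Spec_def subset_iff)
      ultimately have "j \<in> Q \<or> x \<in> Q"
        using j J.a_subset x by (intro primeideal.I_prime) (auto simp: amalg_colon_def)
      then show ?thesis
        using Q x_avoids by blast
    qed
    then show False
      using assms(3) by blast
  qed
qed

lemma subset_qbar_if_amalg_colon_subset:
  assumes "ideal K A" and "amalg_colon R S J K \<subseteq> Q"
  shows "K \<subseteq> qbar R S f J Q"
proof
  interpret K: ideal K A by fact
  fix k assume k: "k \<in> K"
  then have "snd k \<in> Q"
    using snd_in_amalg_colon[OF assms(1), of "fst k" "snd k"] assms(2) by auto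
  moreover have "k \<in> carrier A"
    using k K.a_subset by blast
  ultimately show "k \<in> qbar R S f J Q"
    by (simp add: qbar_eq)
qed

lemma compactly_packed_qbar_image:
  assumes packed: "compactly_packed S (Spec S - VJ S J)"
  shows "compactly_packed A (qbar R S f J ` (Spec S - VJ S J))"
  unfolding compactly_packed_def
proof (intro allI impI)
  fix K Ps
  assume K: "ideal K A" and "Ps \<subseteq> qbar R S f J ` (Spec S - VJ S J)" and K_Ps: "K \<subseteq> \<Union>Ps"
  then obtain Qs where Qs: "Qs \<subseteq> Spec S - VJ S J" and Ps: "Ps = qbar R S f J ` Qs"
    by (auto simp: subset_image_iff)
  have "\<not> J \<subseteq> \<Union>Qs"
  proof
    assume "J \<subseteq> \<Union>Qs"
    then obtain Q where "Q \<in> Qs" and "J \<subseteq> Q"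
      using compactly_packedD[OF packed J.ideal_axioms Qs] by blast
    then show False
      using Qs by (auto simp: VJ_def)
  qed
  then have "amalg_colon R S J K \<subseteq> \<Union>Qs"
    using K_Ps Qs Ps by (intro amalg_colon_subset_Union) auto
  then obtain Q where "Q \<in> Qs" and "amalg_colon R S J K \<subseteq> Q"
    using compactly_packedD[OF packed ideal_amalg_colon[OF K] Qs] by blast
  then show "\<exists>P\<in>Ps. K \<subseteq> P"
    using subset_qbar_if_amalg_colon_subset[OF K] Ps by blast
qed

end

theorem proposition4p5:
  fixes R :: "('a, 'm) ring_scheme" and S :: "('b, 'n) ring_scheme"
    and f :: "'a \<Rightarrow> 'b" and J :: "'b set" and q :: "'c \<Rightarrow> 'b set" and \<Delta> :: "'c set"
  assumes "cring R" and "cring S" and "f \<in> ring_hom R S"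
    and "ideal J S" and "J \<noteq> {\<zero>\<^bsub>S\<^esub>}" and "J \<noteq> carrier S"
    and "compactly_packed S (Spec S - VJ S J)"
    and "\<forall>\<delta>\<in>\<Delta>. q \<delta> \<in> Spec S - VJ S J"
  shows "compactly_packed (amalg R S f J) ((\<lambda>\<delta>. qbar R S f J (q \<delta>)) ` \<Delta>)"
proof -
  interpret amalgamation R S f J
    using assms(1-4) by (intro amalgamation.intro amalgamation_axioms.intro cring.axioms(1))
  have "(\<lambda>\<delta>. qbar R S f J (q \<delta>)) ` \<Delta> \<subseteq> qbar R S f J ` (Spec S - VJ S J)"
    using assms(8) by blast
  with compactly_packed_qbar_image[OF assms(7)] show ?thesis
    by (rule compactly_packed_subset)
qed

end
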